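(* Every normal algebra of differentiable functions $\mathcal V$ is an extension of $R_\ell$; that is, it contains elements $u_i^{(n)}$ ($i\in I$, $n\in\mathbb Z_+$) with $\frac{\partial u_i^{(n)}}{\partial u_j^{(m)}}=\delta_{ij}\delta_{mn}$ for all $i,j,m,n$, which can moreover be chosen so that $\partial u_i^{(n)}=u_i^{(n+1)}$.
   Context: $\mathbb F$ field of characteristic 0, $I=\{1,\dots,\ell\}$. An algebra of differentiable functions is a unital commutative associative algebra $\mathcal V$ with a derivation $\partial$ and commuting derivations $\frac{\partial}{\partial u_i^{(n)}}$, only finitely many nonzero on each element, with $[\frac{\partial}{\partial u_i^{(n)}},\partial]=\frac{\partial}{\partial u_i^{(n-1)}}$ (zero if $n=0$). $R_\ell=\mathbb F[u_i^{(n)}]$ with $\partial u_i^{(n)}=u_i^{(n+1)}$. $\mathcal V_{n,i}=\{f:\frac{\partial f}{\partial u_j^{(m)}}=0$ for $(m,j)>(n,i)$ lexicographically$\}$, $\mathcal V_{n,0}=\mathcal V_{n-1,\ell}$. $\mathcal V$ is normal if $\frac{\partial}{\partial u_i^{(n)}}(\mathcal V_{n,i})=\mathcal V_{n,i}$ for all $i\in I,n\in\mathbb Z_+$. *)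

theory Defs
  imports Main
begin

text \<open>A unital commutative associative algebra over a field 'k is modelled as a
  commutative ring 'v together with the structure map emb : 'k \<rightarrow> 'v
  (a unital ring homomorphism); scalar multiplication is c \<cdot> f = emb c * f.\<close>

definition algebra_map :: "('k::field \<Rightarrow> 'v::comm_ring_1) \<Rightarrow> bool" where
  "algebra_map emb \<longleftrightarrow> emb 0 = 0 \<and> emb 1 = 1 \<and>
     (\<forall>a b. emb (a + b) = emb a + emb b) \<and> (\<forall>a b. emb (a * b) = emb a * emb b)"

definition is_derivation :: "('k::field \<Rightarrow> 'v::comm_ring_1) \<Rightarrow> ('v \<Rightarrow> 'v) \<Rightarrow> bool" where
  "is_derivation emb D \<longleftrightarrow>
     (\<forall>f g. D (f + g) = D f + D g) \<and>
     (\<forall>f g. D (f * g) = D f * g + f * D g) \<and>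
     (\<forall>c f. D (emb c * f) = emb c * D f)"

text \<open>Algebra of differentiable functions in \<ell> variables, I = {1..\<ell>}.
  P i n is the partial derivative with respect to u_i^{(n)}, d is \<partial>.\<close>

definition alg_diff_fun ::
  "('k::field_char_0 \<Rightarrow> 'v::comm_ring_1) \<Rightarrow> nat \<Rightarrow> ('v \<Rightarrow> 'v) \<Rightarrow> (nat \<Rightarrow> nat \<Rightarrow> 'v \<Rightarrow> 'v) \<Rightarrow> bool"
  where
  "alg_diff_fun emb l d P \<longleftrightarrow>
     algebra_map emb \<and>
     is_derivation emb d \<and>
     (\<forall>i\<in>{1..l}. \<forall>n. is_derivation emb (P i n)) \<and>
     (\<forall>i\<in>{1..l}. \<forall>j\<in>{1..l}. \<forall>n m f. P i n (P j m f) = P j m (P i n f)) \<and>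
     (\<forall>f. finite {(i, n). i \<in> {1..l} \<and> P i n f \<noteq> 0}) \<and>
     (\<forall>i\<in>{1..l}. \<forall>n f. P i n (d f) - d (P i n f) = (if n = 0 then 0 else P i (n - 1) f))"

definition Vfilt :: "nat \<Rightarrow> (nat \<Rightarrow> nat \<Rightarrow> 'v::comm_ring_1 \<Rightarrow> 'v) \<Rightarrow> nat \<Rightarrow> nat \<Rightarrow> 'v set" where
  "Vfilt l P n i = {f. \<forall>j\<in>{1..l}. \<forall>m. (n < m \<or> (m = n \<and> i < j)) \<longrightarrow> P j m f = 0}"

definition normal_adf ::
  "('k::field_char_0 \<Rightarrow> 'v::comm_ring_1) \<Rightarrow> nat \<Rightarrow> ('v \<Rightarrow> 'v) \<Rightarrow> (nat \<Rightarrow> nat \<Rightarrow> 'v \<Rightarrow> 'v) \<Rightarrow> bool"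
  where
  "normal_adf emb l d P \<longleftrightarrow> alg_diff_fun emb l d P \<and>
     (\<forall>i\<in>{1..l}. \<forall>n. P i n ` Vfilt l P n i = Vfilt l P n i)"

end

theory Submission
  imports Defs
begin

text \<open>By normality \<partial>/\<partial>u_i^(0) maps V_{0,i} onto itself, so some h \<in> V_{0,i} has
  \<partial>h/\<partial>u_i^(0) = 1. The remaining first-order partials \<partial>h/\<partial>u_j^(0), j < i, are removed
  for j = i - 1 down to 1: all partials of h beyond (0, j) are constants, hence g = \<partial>h/\<partial>u_j^(0)
  lies in V_{0,j}, so g = \<partial>F/\<partial>u_j^(0) for some F \<in> V_{0,j}, and h - F is the improved choice. Since [\<partial>/\<partial>u_j^(m), \<partial>] = \<partial>/\<partial>u_j^(m-1) and \<partial> kills constants,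
  the elements u_i^(n) = \<partial>^n u_i^(0) are coordinates.\<close>

lemma derivation_zero: "is_derivation emb D \<Longrightarrow> D 0 = 0"
  unfolding is_derivation_def by (metis add_cancel_left_right add_0)

lemma derivation_one: "is_derivation emb D \<Longrightarrow> D 1 = 0"
  unfolding is_derivation_def by (metis add_cancel_left_right mult_1 mult_1_right)

lemma derivation_diff: "is_derivation emb D \<Longrightarrow> D (a - b) = D a - D b"
  unfolding is_derivation_def by (metis add_diff_cancel diff_add_cancel)

lemma derivation_indicator: "is_derivation emb D \<Longrightarrow> D (if b then 1 else 0) = 0"
  by (simp add: derivation_zero derivation_one)

lemma alg_diff_fun_derivation: "alg_diff_fun emb l d P \<Longrightarrow> is_derivation emb d"
  unfolding alg_diff_fun_def by blast

lemma alg_diff_fun_partial_derivation: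
  "alg_diff_fun emb l d P \<Longrightarrow> i \<in> {1..l} \<Longrightarrow> is_derivation emb (P i n)"
  unfolding alg_diff_fun_def by blast

lemma alg_diff_fun_partial_commute:
  "alg_diff_fun emb l d P \<Longrightarrow> i \<in> {1..l} \<Longrightarrow> j \<in> {1..l} \<Longrightarrow> P i n (P j m f) = P j m (P i n f)"
  unfolding alg_diff_fun_def by blast

lemma alg_diff_fun_partial_derivation_d:
  assumes "alg_diff_fun emb l d P" and "j \<in> {1..l}"
  shows "P j m (d f) = d (P j m f) + (if m = 0 then 0 else P j (m - 1) f)"
proof -
  have "P j m (d f) - d (P j m f) = (if m = 0 then 0 else P j (m - 1) f)"
    using assms unfolding alg_diff_fun_def by blast
  then show ?thesis by (simp add: algebra_simps)
qed

lemma Vfilt_0_iff: "f \<in> Vfilt l P 0 i \<longleftrightarrow> (\<forall>k\<in>{1..l}. \<forall>m. (0 < m \<or> i < k) \<longrightarrow> P k m f = 0)"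
proof -
  have "(0 < m \<or> m = 0 \<and> i < k) \<longleftrightarrow> (0 < m \<or> i < k)" for m :: nat and k
    by auto
  then show ?thesis unfolding Vfilt_def by (simp only: mem_Collect_eq)
qed

lemma alg_diff_fun_partial_d_coordinate:
  assumes A: "alg_diff_fun emb l d P"
    and f: "\<forall>j\<in>{1..l}. \<forall>m. P j m f = (if j = i \<and> m = n then 1 else 0)"
  shows "\<forall>j\<in>{1..l}. \<forall>m. P j m (d f) = (if j = i \<and> m = Suc n then 1 else 0)"
proof (intro ballI allI)
  fix j m assume j: "j \<in> {1..l}"
  have "d (P j m f) = 0"
    using f j derivation_indicator[OF alg_diff_fun_derivation[OF A]] by simp
  then show "P j m (d f) = (if j = i \<and> m = Suc n then 1 else 0)"
    using alg_diff_fun_partial_derivation_d[OF A j, of m f] f j by (cases m) auto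
qed

lemma normal_adf_clear_partial:
  assumes N: "normal_adf emb l d P" and i: "i \<in> {1..l}" and j: "j \<in> {1..l}" "j < i"
    and h: "h \<in> Vfilt l P 0 i" "P i 0 h = 1" "\<forall>k\<in>{1..l}. j < k \<and> k < i \<longrightarrow> P k 0 h = 0"
  shows "\<exists>h'\<in>Vfilt l P 0 i. P i 0 h' = 1 \<and> (\<forall>k\<in>{1..l}. j \<le> k \<and> k < i \<longrightarrow> P k 0 h' = 0)"
proof -
  have A: "alg_diff_fun emb l d P" using N unfolding normal_adf_def by blast
  have Dj: "is_derivation emb (P j 0)" using alg_diff_fun_partial_derivation[OF A j(1)] .
  have h_above: "P k m h = 0" if "k \<in> {1..l}" "0 < m \<or> i < k" for k and m :: nat
    using h(1) that unfolding Vfilt_0_iff by blast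
  \<comment> \<open>above \<open>(0, j)\<close> every partial of \<open>h\<close> is \<open>0\<close> or \<open>1\<close>, so \<open>P j 0\<close> kills it\<close>
  have "P j 0 h \<in> Vfilt l P 0 j"
    unfolding Vfilt_0_iff
  proof (intro ballI allI impI)
    fix k and m :: nat assume k: "k \<in> {1..l}" and km: "0 < m \<or> j < k"
    have "P k m h = (if k = i \<and> m = 0 then 1 else 0)"
      using h(2,3) h_above k km by (cases m) (auto simp: linorder_neq_iff simp del: atLeastAtMost_iff)
    then show "P k m (P j 0 h) = 0"
      using alg_diff_fun_partial_commute[OF A k j(1)] derivation_indicator[OF Dj] by simp
  qed
  moreover have "P j 0 ` Vfilt l P 0 j = Vfilt l P 0 j"
    using N j(1) unfolding normal_adf_def by blast
  ultimately obtain F where F: "F \<in> Vfilt l P 0 j" "P j 0 F = P j 0 h"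
    by (metis imageE)
  have F_above: "P k m F = 0" if "k \<in> {1..l}" "0 < m \<or> j < k" for k and m :: nat
    using F(1) that unfolding Vfilt_0_iff by blast
  have diff: "P k m (h - F) = P k m h - P k m F" if "k \<in> {1..l}" for k m
    using derivation_diff[OF alg_diff_fun_partial_derivation[OF A that]] .
  have "h - F \<in> Vfilt l P 0 i"
    unfolding Vfilt_0_iff using diff h_above F_above j(2) by auto
  moreover have "P i 0 (h - F) = 1"
    using diff[OF i] h(2) F_above[OF i] j(2) by simp
  moreover have "P k 0 (h - F) = 0" if "k \<in> {1..l}" "j \<le> k" "k < i" for k
    using that diff h(3) F(2) F_above by (cases "k = j") auto
  ultimately show ?thesis by blast
qed

lemma normal_adf_exists_coordinate_0:
  assumes N: "normal_adf emb l d P" and i: "i \<in> {1..l}"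
  shows "\<exists>h. \<forall>j\<in>{1..l}. \<forall>m. P j m h = (if j = i \<and> m = 0 then 1 else 0)"
proof -
  have "\<exists>h\<in>Vfilt l P 0 i. P i 0 h = 1 \<and> (\<forall>k\<in>{1..l}. j \<le> k \<and> k < i \<longrightarrow> P k 0 h = 0)"
    if "1 \<le> j" "j \<le> i" for j
    using that(2)
  proof (induction rule: inc_induct)
    case base
    have A: "alg_diff_fun emb l d P" using N unfolding normal_adf_def by blast
    have "1 \<in> Vfilt l P 0 i"
      unfolding Vfilt_0_iff using derivation_one[OF alg_diff_fun_partial_derivation[OF A]] by blast
    moreover have "P i 0 ` Vfilt l P 0 i = Vfilt l P 0 i"
      using N i unfolding normal_adf_def by blast
    ultimately show ?case by (metis imageE less_le_not_le)
  next
    case (step n)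
    have "n \<in> {1..l}" using step.hyps that(1) i by auto
    moreover have "Suc n \<le> k \<longleftrightarrow> n < k" for k by auto
    ultimately show ?case
      using normal_adf_clear_partial[OF N i _ step.hyps(2)] step.IH by auto
  qed
  from this[of 1] i obtain h where h: "h \<in> Vfilt l P 0 i" "P i 0 h = 1" "\<forall>k\<in>{1..l}. k < i \<longrightarrow> P k 0 h = 0"
    by auto
  have "P j m h = (if j = i \<and> m = 0 then 1 else 0)" if "j \<in> {1..l}" for j m
    using h that unfolding Vfilt_0_iff by (cases m; cases "j < i"; cases "j = i") auto
  then show ?thesis by blast
qed

theorem proposition4p3:
  fixes emb :: "'k::field_char_0 \<Rightarrow> 'v::comm_ring_1"
    and l :: nat and d :: "'v \<Rightarrow> 'v" and P :: "nat \<Rightarrow> nat \<Rightarrow> 'v \<Rightarrow> 'v"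
  assumes "normal_adf emb l d P"
  shows "\<exists>u :: nat \<Rightarrow> nat \<Rightarrow> 'v.
           (\<forall>i\<in>{1..l}. \<forall>j\<in>{1..l}. \<forall>n m. P j m (u i n) = (if i = j \<and> m = n then 1 else 0)) \<and>
           (\<forall>i\<in>{1..l}. \<forall>n. d (u i n) = u i (Suc n))"
proof -
  have A: "alg_diff_fun emb l d P" using assms unfolding normal_adf_def by blast
  have "\<forall>i\<in>{1..l}. \<exists>h. \<forall>j\<in>{1..l}. \<forall>m. P j m h = (if j = i \<and> m = 0 then 1 else 0)"
    using normal_adf_exists_coordinate_0[OF assms] by blast
  then obtain u0 where u0: "\<forall>i\<in>{1..l}. \<forall>j\<in>{1..l}. \<forall>m. P j m (u0 i) = (if j = i \<and> m = 0 then 1 else 0)"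
    by (metis bchoice)
  define u where "u i n = (d ^^ n) (u0 i)" for i n
  have u_Suc: "u i (Suc n) = d (u i n)" for i n
    unfolding u_def by simp
  have u_coordinate: "\<forall>j\<in>{1..l}. \<forall>m. P j m (u i n) = (if j = i \<and> m = n then 1 else 0)"
    if "i \<in> {1..l}" for i n
  proof (induction n)
    case 0
    show ?case using u0 that unfolding u_def by simp
  next
    case (Suc n)
    show ?case unfolding u_Suc by (rule alg_diff_fun_partial_d_coordinate[OF A Suc.IH])
  qed
  show ?thesis
    by (intro exI[of _ u] conjI ballI allI) (auto simp: u_coordinate u_Suc)
qed

end
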